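(* (i) For every positive integer $n$, $$s(n):=\frac{2}{n}\sum_{k=1}^n (2k+1)M_k^2\in\mathbb{Z}.$$ (ii) For every prime $p>3$, $$\sum_{k=0}^{p-1}(2k+1)M_k^2\equiv 12p\left(\frac{p}{3}\right)\pmod{p^2}.$$
   Context: For $n\in\mathbb{N}=\{0,1,2,\dots\}$, $M_n$ denotes the Motzkin number $M_n=\sum_{k=0}^{\lfloor n/2\rfloor}\binom{n}{2k}C_k$, where $C_k=\binom{2k}{k}/(k+1)$ is the Catalan number. $\left(\frac{p}{3}\right)$ is the Legendre symbol. *)

theory Defs
  imports "HOL-Number_Theory.Number_Theory"
begin

definition catalan :: "nat \<Rightarrow> nat" where
  "catalan k = ((2*k) choose k) div (k+1)"

definition motzkin :: "nat \<Rightarrow> nat" where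
  "motzkin n = (\<Sum>k=0..n div 2. (n choose (2*k)) * catalan k)"

end

theory Submission
  imports Defs "HOL-Computational_Algebra.Polynomial"
begin

(* The Motzkin numbers satisfy (n + 3) M(n+1) = (2n + 3) M(n) + 3n M(n-1), obtained by creative
   telescoping from the binomial-Catalan sum. With it one checks by induction that
   4 * sum_{k=1..n} (2k + 1) M(k)^2 = n Q(n) for an explicit quadratic form Q in M(n), M(n-1),
   and Q(n) is even because M(n) and M(n-1) have the same parity for odd n; this gives (i).

   For (ii), M(n) = T(n, n) - T(n, n + 2) with the trinomial coefficients T(n, m) of
   (1 + x + x^2)^n. Comparing coefficients in (1 + x + x^2)^p (1 - x)^p = (1 - x^3)^p, where
   p divides the binomial coefficients C(p, k) for 0 < k < p, gives T(p, m) modulo p for m < p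
   and T(p, p), T(p, p + 2) modulo p^2, hence 2 M(p) modulo p^2. The coefficients of
   (1 + x + x^2)^(p-1) are those of 1 / (1 + x + x^2) modulo p, which gives M(p - 1) modulo p.
   Substituting both into the closed form at n = p - 1 yields the congruence. *)

section \<open>Catalan numbers and the Motzkin recurrence\<close>

lemma binomial_Suc_absorb: "(k + 1) * (n choose (k + 1)) = (n - k) * (n choose k)"
proof (cases n)
  case (Suc m)
  then show ?thesis
    using Suc_times_binomial[of k m] binomial_absorb_comp[of n k] by simp
qed simp

lemma catalan_mult_Suc: "catalan k * (k + 1) = (2*k) choose k"
proof -
  have "coprime (k + 1) (2*k + 1)"
  proof (rule coprimeI)
    fix c assume "c dvd k + 1" and "c dvd 2*k + 1"
    then have "c dvd 2*(k + 1) - (2*k + 1)" by (intro dvd_diff_nat dvd_mult)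
    then show "is_unit c" by simp
  qed
  moreover have "(k + 1) dvd (2*k + 1) * ((2*k) choose k)"
    using Suc_times_binomial_eq[of "2*k" k, unfolded Suc_eq_plus1] by (metis dvd_triv_right)
  ultimately have "(k + 1) dvd (2*k) choose k"
    using coprime_dvd_mult_right_iff by blast
  then show ?thesis unfolding catalan_def by (rule dvd_div_mult_self)
qed

lemma central_binomial_Suc: "(k + 1) * ((2*k + 2) choose (k + 1)) = 2 * (2*k + 1) * ((2*k) choose k)"
proof -
  define X Y Z where "X = (2*k + 2) choose (k + 1)" and "Y = (2*k + 1) choose k"
    and "Z = (2*k) choose k"
  have "(k + 1) * X = (2*k + 2) * Y"
    unfolding X_def Y_def using Suc_times_binomial[of k "2*k + 1", unfolded Suc_eq_plus1 add.assoc one_add_one] .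
  also have "\<dots> = 2 * ((k + 1) * Y)" by simp
  also have "(k + 1) * Y = (2*k + 1) * Z"
  proof -
    have "(k + 1) * ((2*k + 1) choose (k + 1)) = (k + 1) * Y"
      unfolding Y_def using binomial_Suc_absorb[of k "2*k + 1"] by simp
    moreover have "(k + 1) * ((2*k + 1) choose (k + 1)) = (2*k + 1) * Z"
      unfolding Z_def using Suc_times_binomial[of k "2*k", unfolded Suc_eq_plus1] .
    ultimately show ?thesis by simp
  qed
  finally show ?thesis unfolding X_def Z_def by simp
qed

lemma catalan_Suc: "(k + 2) * catalan (k + 1) = 2 * (2*k + 1) * catalan k"
proof -
  define C C' where "C = catalan k" and "C' = catalan (k + 1)"
  have "(k + 1) * ((k + 2) * C') = (k + 1) * ((2*k + 2) choose (k + 1))"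
    unfolding C'_def using catalan_mult_Suc[of "k + 1"] by (simp add: algebra_simps)
  also have "\<dots> = 2 * (2*k + 1) * (C * (k + 1))"
    unfolding central_binomial_Suc C_def catalan_mult_Suc ..
  also have "\<dots> = (k + 1) * (2 * (2*k + 1) * C)"
    by (simp only: ac_simps)
  finally have "(k + 2) * C' = 2 * (2*k + 1) * C"
    by (simp only: mult_left_cancel[of "k + 1"] add_eq_0_iff_both_eq_0 one_neq_zero simp_thms)
  then show ?thesis unfolding C_def C'_def .
qed

lemma catalan_eq_diff_binomial: "int (catalan k) = int ((2*k) choose k) - int ((2*k) choose (k + 1))"
proof -
  define B B' where "B = (2*k) choose k" and "B' = (2*k) choose (k + 1)"
  have "(k + 1) * B' = k * B"
    unfolding B_def B'_def using binomial_Suc_absorb[of k "2*k"] by simp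
  then have "int (k + 1) * (int B - int B') = int B"
    by (simp add: algebra_simps flip: of_nat_mult)
  also have "\<dots> = int (k + 1) * int (catalan k)"
    unfolding B_def by (metis catalan_mult_Suc mult.commute of_nat_mult)
  finally show ?thesis unfolding B_def B'_def by simp
qed

definition motzkin_summand :: "nat \<Rightarrow> nat \<Rightarrow> int" where
  "motzkin_summand n k = int ((n choose (2*k)) * catalan k)"

lemma motzkin_summand_eq_0: "n < 2*k \<Longrightarrow> motzkin_summand n k = 0"
  by (simp add: motzkin_summand_def)

lemma motzkin_eq_sum_summand:
  assumes "n div 2 < N"
  shows "int (motzkin n) = (\<Sum>k<N. motzkin_summand n k)"
proof -
  have "int (motzkin n) = (\<Sum>k=0..n div 2. motzkin_summand n k)"
    by (simp add: motzkin_def motzkin_summand_def)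
  also have "\<dots> = (\<Sum>k<N. motzkin_summand n k)"
    using assms by (intro sum.mono_neutral_left) (auto intro: motzkin_summand_eq_0)
  finally show ?thesis .
qed

lemma motzkin_summand_Suc_left:
  "int (n + 1) * motzkin_summand n k = (int n + 1 - 2 * int k) * motzkin_summand (n + 1) k"
proof (cases "2*k \<le> n + 1")
  case True
  have "(n + 1 - 2*k) * ((n + 1) choose (2*k)) = (n + 1) * (n choose (2*k))"
    using binomial_absorb_comp[of "n + 1" "2*k"] by simp
  then have "int (n + 1 - 2*k) * int ((n + 1) choose (2*k)) = int (n + 1) * int (n choose (2*k))"
    by (simp only: flip: of_nat_mult)
  moreover have "int (n + 1 - 2*k) = int n + 1 - 2 * int k"
    using True by simp
  ultimately have "(int n + 1 - 2 * int k) * int ((n + 1) choose (2*k)) = int (n + 1) * int (n choose (2*k))"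
    by (simp only:)
  then show ?thesis
    unfolding motzkin_summand_def of_nat_mult by (simp only: flip: mult.assoc)
qed (simp add: motzkin_summand_eq_0)

lemma motzkin_summand_Suc_right:
  "int ((k + 1) * (k + 2)) * motzkin_summand m (k + 1)
     = (int m - 2 * int k) * (int m - 2 * int k - 1) * motzkin_summand m k"
proof (cases "2*k + 1 \<le> m")
  case True
  define B0 B1 B2 where "B0 = m choose (2*k)" and "B1 = m choose (2*k + 1)"
    and "B2 = m choose (2*k + 2)"
  define C C' where "C = catalan k" and "C' = catalan (k + 1)"
  have B2: "(2*k + 2) * B2 = (m - (2*k + 1)) * B1"
    unfolding B1_def B2_def using binomial_Suc_absorb[of "2*k + 1" m, unfolded add.assoc one_add_one] .
  have B1: "(2*k + 1) * B1 = (m - 2*k) * B0"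
    unfolding B0_def B1_def using binomial_Suc_absorb[of "2*k" m] .
  have "(k + 1) * (k + 2) * (B2 * C') = (k + 1) * B2 * ((k + 2) * C')"
    by (simp only: ac_simps)
  also have "\<dots> = ((2*k + 1) * ((2*k + 2) * B2)) * C"
    unfolding C_def C'_def catalan_Suc by (simp add: algebra_simps)
  also have "\<dots> = (m - 2*k) * (m - (2*k + 1)) * B0 * C"
    unfolding B2 mult.left_commute[of "2*k + 1"] B1 by (simp only: ac_simps)
  finally have "int ((k + 1) * (k + 2)) * int (B2 * C') = int (m - 2*k) * int (m - (2*k + 1)) * int (B0 * C)"
    by (simp only: mult.assoc flip: of_nat_mult)
  moreover have "int (m - 2*k) = int m - 2 * int k" "int (m - (2*k + 1)) = int m - 2 * int k - 1"
    using True by auto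
  ultimately show ?thesis
    unfolding B0_def B2_def C_def C'_def motzkin_summand_def by (simp only: distrib_left mult_1_right)
next
  case False
  then consider "m = 2*k" | "m < 2*k" by linarith
  then show ?thesis
    by cases (simp_all add: motzkin_summand_eq_0)
qed

abbreviation M :: "nat \<Rightarrow> int" where
  "M n \<equiv> int (motzkin n)"

lemma motzkin_recurrence:
  assumes "n \<ge> 1"
  shows "int (n + 3) * M (n + 1) = int (2*n + 3) * M n + int (3*n) * M (n - 1)"
proof -
  define T where "T k = motzkin_summand (n + 1) k" for k
  \<comment> \<open>the certificate of the creative telescoping\<close>
  define f where "f k = int (k * (k + 1)) * T k" for k
  have step: "int n * int (n + 1) * (int (n + 3) * T k - int (2*n + 3) * motzkin_summand n k
                - int (3*n) * motzkin_summand (n - 1) k) = 4 * int n * (f k - f (Suc k))" for k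
  proof -
    define u where "u = int n + 1 - 2 * int k"
    define a b where "a = motzkin_summand n k" and "b = motzkin_summand (n - 1) k"
    have a: "int (n + 1) * a = u * T k"
      unfolding a_def u_def T_def by (rule motzkin_summand_Suc_left)
    have b: "int n * b = (u - 1) * a"
      using motzkin_summand_Suc_left[of "n - 1" k] assms unfolding a_def b_def u_def
      by simp
    have f_Suc: "f (Suc k) = u * (u - 1) * T k"
      using motzkin_summand_Suc_right[of k "n + 1"] unfolding f_def T_def u_def
      by (simp add: algebra_simps)
    have "int n * int (n + 1) * (int (n + 3) * T k - int (2*n + 3) * a - int (3*n) * b)
          = int n * (int (n + 1) * int (n + 3) * T k - int (2*n + 3) * (int (n + 1) * a)
              - 3 * int (n + 1) * (int n * b))"
      by (simp add: algebra_simps)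
    also have "\<dots> = int n * (int (n + 1) * int (n + 3) * T k - int (2*n + 3) * (int (n + 1) * a)
              - 3 * (u - 1) * (int (n + 1) * a))"
      unfolding b by (simp add: algebra_simps)
    also have "\<dots> = int n * T k * (int (n + 1) * int (n + 3) - int (2*n + 3) * u - 3 * u * (u - 1))"
      unfolding a by (simp add: algebra_simps)
    also have "\<dots> = 4 * int n * (f k - f (Suc k))"
      unfolding f_Suc by (simp add: f_def u_def algebra_simps)
    finally show ?thesis unfolding a_def b_def .
  qed
  define N where "N = n + 2"
  have sums: "int (motzkin (n + 1)) = (\<Sum>k<N. T k)" "int (motzkin n) = (\<Sum>k<N. motzkin_summand n k)"
    "int (motzkin (n - 1)) = (\<Sum>k<N. motzkin_summand (n - 1) k)"
    unfolding T_def N_def by (rule motzkin_eq_sum_summand; simp)+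
  have "int n * int (n + 1) * (int (n + 3) * int (motzkin (n + 1)) - int (2*n + 3) * int (motzkin n)
          - int (3*n) * int (motzkin (n - 1)))
        = (\<Sum>k<N. int n * int (n + 1) * (int (n + 3) * T k - int (2*n + 3) * motzkin_summand n k
                - int (3*n) * motzkin_summand (n - 1) k))"
    unfolding sums by (simp add: sum_distrib_left sum_subtractf right_diff_distrib)
  also have "\<dots> = 4 * int n * (f 0 - f N)"
    by (simp only: step sum_lessThan_telescope' flip: sum_distrib_left)
  also have "\<dots> = 0"
    unfolding f_def T_def N_def by (simp add: motzkin_summand_eq_0)
  finally show ?thesis
    using assms by simp
qed

section \<open>A closed form for the weighted sum of squares\<close>

lemma motzkin_0 [simp]: "motzkin 0 = 1"
  and motzkin_Suc_0 [simp]: "motzkin (Suc 0) = 1"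
  by (simp_all add: motzkin_def catalan_def)

definition motzkin_square_sum :: "nat \<Rightarrow> int" where
  "motzkin_square_sum n = (\<Sum>k=1..n. int ((2*k + 1) * (motzkin k)^2))"

definition Q_form :: "nat \<Rightarrow> int" where
  "Q_form n = - (4 * int n^2 + 17 * int n + 12) * M n^2 + 6 * (4 * int n^2 + 11 * int n + 6) * M n * M (n - 1)
      - 9 * int n * (4 * int n + 5) * M (n - 1)^2"

definition R_form :: "nat \<Rightarrow> int" where
  "R_form n = - 9 * (int n + 1)^2 * (4 * int n + 9) * M n^2
      + 6 * (int n + 1) * (int n + 3) * (4 * int n + 7) * M n * M (n + 1)
      - (int n + 3)^2 * (4 * int n + 5) * M (n + 1)^2"

lemma R_form_eq_Q_form:
  assumes "n \<ge> 1"
  shows "R_form n = int n * Q_form n"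
proof -
  define Y where "Y = 3 * int n * M (n - 1)"
  have Y: "Y = (int n + 3) * M (n + 1) - (2 * int n + 3) * M n"
    unfolding Y_def using motzkin_recurrence[OF assms] by (simp add: algebra_simps)
  have "int n * Q_form n = - int n * (4 * int n^2 + 17 * int n + 12) * M n^2
      + 2 * (4 * int n^2 + 11 * int n + 6) * M n * Y - (4 * int n + 5) * Y^2"
    unfolding Q_form_def Y_def by (simp add: algebra_simps power2_eq_square)
  also have "\<dots> = R_form n"
    unfolding Y R_form_def by (simp add: algebra_simps power2_eq_square)
  finally show ?thesis ..
qed

lemma motzkin_square_sum_closed_form:
  assumes "n \<ge> 1"
  shows "4 * motzkin_square_sum n = int n * Q_form n"
  using assms
proof (induction n rule: dec_induct)
  case base
  show ?case by (simp add: motzkin_square_sum_def Q_form_def)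
next
  case (step m)
  have "4 * motzkin_square_sum (Suc m) = 4 * motzkin_square_sum m + 4 * (2 * int m + 3) * M (Suc m)^2"
    unfolding motzkin_square_sum_def by (simp add: algebra_simps)
  also have "\<dots> = R_form m + 4 * (2 * int m + 3) * M (Suc m)^2"
    using step R_form_eq_Q_form[OF step(1)] by simp
  also have "\<dots> = int (Suc m) * Q_form (Suc m)"
    unfolding R_form_def Q_form_def by (simp add: algebra_simps power2_eq_square)
  finally show ?case .
qed

lemma R_form_pred:
  assumes "n \<ge> 1"
  shows "4 * R_form (n - 1) = - 36 * int n^2 * (4 * int n + 5) * M (n - 1)^2
      + 12 * int n * (int n + 2) * (4 * int n + 3) * M (n - 1) * (2 * M n)
      - (int n + 2)^2 * (4 * int n + 1) * (2 * M n)^2"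
proof -
  have "int (n - 1) = int n - 1" "n - 1 + 1 = n"
    using assms by auto
  then show ?thesis
    unfolding R_form_def by (simp add: algebra_simps power2_eq_square)
qed

lemma motzkin_parity:
  assumes "odd n"
  shows "even (M n + M (n - 1))"
proof (cases "n = 1")
  case False
  obtain i where "n = 2*i + 1" using assms oddE by blast
  with False obtain j where j: "n = 2*j + 3" by (cases i) auto
  have "int (2*j + 5) * M (2*j + 3) = int (4*j + 7) * M (2*j + 2) + int (6*j + 6) * M (2*j + 1)"
    using motzkin_recurrence[of "2*j + 2"] by (simp add: numeral_eq_Suc)
  then have "M (2*j + 3) + M (2*j + 2)
      = 2 * ((2 * int j + 4) * M (2*j + 2) + (3 * int j + 3) * M (2*j + 1) - (int j + 2) * M (2*j + 3))"
    by (simp add: algebra_simps)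
  then show ?thesis
    unfolding j by (simp add: numeral_eq_Suc)
qed simp

lemma Q_form_even:
  assumes "n \<ge> 1"
  shows "even (Q_form n)"
proof -
  have "Q_form n = - int n * (M n^2 + M (n - 1)^2) + 2 * (- (2 * int n^2 + 8 * int n + 6) * M n^2
          + 3 * (4 * int n^2 + 11 * int n + 6) * M n * M (n - 1) - (18 * int n^2 + 22 * int n) * M (n - 1)^2)"
    unfolding Q_form_def by (simp add: algebra_simps power2_eq_square)
  moreover have "even (int n * (M n^2 + M (n - 1)^2))"
  proof (cases "even n")
    case False
    then have "even ((M n + M (n - 1))^2 - 2 * M n * M (n - 1))"
      using motzkin_parity by simp
    then show ?thesis by (simp add: power2_eq_square algebra_simps)
  qed simp
  ultimately show ?thesis by simp
qed

theorem motzkin_square_sum_integrality: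
  assumes "n \<ge> 1"
  shows "(2 / of_nat n) * (\<Sum>k=1..n. of_nat ((2*k + 1) * (motzkin k)^2) :: rat) \<in> \<int>"
proof -
  obtain q where q: "Q_form n = 2 * q" using Q_form_even[OF assms] by blast
  have "2 * motzkin_square_sum n = int n * q"
    using motzkin_square_sum_closed_form[OF assms] q by simp
  then have "2 * (of_int (motzkin_square_sum n) :: rat) = of_nat n * of_int q"
    by (metis of_int_mult of_int_of_nat_eq of_int_numeral)
  moreover have "(\<Sum>k=1..n. of_nat ((2*k + 1) * (motzkin k)^2) :: rat) = of_int (motzkin_square_sum n)"
    unfolding motzkin_square_sum_def by simp
  ultimately have "(2 / of_nat n) * (\<Sum>k=1..n. of_nat ((2*k + 1) * (motzkin k)^2) :: rat) = of_int q"
    using assms by (simp add: field_simps)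
  then show ?thesis by simp
qed

section \<open>Trinomial coefficients\<close>

lemma coeff_monom_plus_one_power:
  fixes c :: "'a :: comm_semiring_1"
  assumes "d > 0"
  shows "coeff ((monom c d + 1) ^ n) m = (if d dvd m then of_nat (n choose (m div d)) * c ^ (m div d) else 0)"
proof -
  have "(monom c d + 1) ^ n = (\<Sum>k\<le>n. monom (of_nat (n choose k) * c ^ k) (d * k))"
    unfolding binomial_ring by (simp add: monom_power mult_monom of_nat_poly flip: monom_0)
  then have "coeff ((monom c d + 1) ^ n) m = (\<Sum>k\<le>n. if d * k = m then of_nat (n choose k) * c ^ k else 0)"
    by (simp add: coeff_sum)
  also have "\<dots> = (if d dvd m then of_nat (n choose (m div d)) * c ^ (m div d) else 0)"
  proof (cases "d dvd m")
    case True
    then obtain q where "m = d * q" by blast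
    with assms show ?thesis by (simp add: binomial_eq_0)
  qed (auto intro!: sum.neutral)
  finally show ?thesis .
qed

definition trinomial :: "nat \<Rightarrow> nat \<Rightarrow> int" where
  "trinomial n m = coeff ([:1, 1, 1:] ^ n) m"

lemma trinomial_Suc_0: "trinomial (Suc n) 0 = trinomial n 0"
  and trinomial_Suc_1: "trinomial (Suc n) 1 = trinomial n 1 + trinomial n 0"
  and trinomial_Suc_Suc: "trinomial (Suc n) (Suc (Suc m)) = trinomial n (m + 2) + trinomial n (m + 1) + trinomial n m"
  unfolding trinomial_def power_Suc by simp_all

lemma trinomial_0_right [simp]: "trinomial n 0 = 1"
  by (induction n) (simp_all add: trinomial_Suc_0, simp add: trinomial_def)

lemma trinomial_1_right: "trinomial n 1 = int n"
  by (induction n) (simp_all add: trinomial_Suc_1[simplified], simp add: trinomial_def)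

lemma trinomial_2_right: "trinomial n 2 = int n + int (n choose 2)"
proof (induction n)
  case (Suc n)
  then show ?case
    using trinomial_Suc_Suc[of n 0] trinomial_1_right[of n] by (simp add: numeral_2_eq_2)
qed (simp add: trinomial_def)

lemma trinomial_central_offset:
  "trinomial n (n + 2*d) = (\<Sum>j=0..n div 2. int ((n choose (2*j)) * ((2*j) choose (j + d))))"
proof -
  define g where "g k = int ((n choose k) * (k choose (k div 2 + d)))" for k
  have "[:1, 1, 1:] ^ n = (monom 1 2 + 1 + monom 1 1 :: int poly) ^ n"
    by (simp add: monom_Suc numeral_2_eq_2 one_pCons)
  also have "\<dots> = (\<Sum>k\<le>n. monom (int (n choose k)) (n - k) * (monom 1 2 + 1) ^ k)"
  proof -
    have "monom (int (n choose k)) (n - k) = monom (int (n choose k)) 0 * monom 1 (n - k)" for k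
      by (simp add: mult_monom)
    then show ?thesis
      unfolding binomial_ring[of "monom 1 2 + 1" "monom 1 1" n]
      by (simp add: monom_power of_nat_monom ac_simps)
  qed
  finally have "trinomial n (n + 2*d) = (\<Sum>k\<le>n. int (n choose k) * coeff ((monom 1 2 + 1) ^ k) (k + 2*d))"
    unfolding trinomial_def by (auto simp: coeff_sum coeff_monom_mult add.commute intro!: sum.cong)
  also have "\<dots> = (\<Sum>k\<le>n. if even k then g k else 0)"
    by (rule sum.cong) (auto simp: coeff_monom_plus_one_power g_def)
  also have "\<dots> = sum g ((\<lambda>j. 2*j) ` {0..n div 2})"
  proof -
    have "{k. k \<le> n \<and> even k} = (\<lambda>j. 2*j) ` {0..n div 2}"
      by (auto elim!: evenE)
    then show ?thesis by (simp add: sum.inter_filter[symmetric])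
  qed
  also have "\<dots> = (\<Sum>j=0..n div 2. int ((n choose (2*j)) * ((2*j) choose (j + d))))"
    by (subst sum.reindex) (auto simp: inj_on_def g_def)
  finally show ?thesis .
qed

lemma motzkin_eq_trinomial: "M n = trinomial n n - trinomial n (n + 2)"
  using trinomial_central_offset[of n 0] trinomial_central_offset[of n 1]
  by (simp add: motzkin_def catalan_eq_diff_binomial algebra_simps sum_subtractf)

definition cubic_binomial :: "nat \<Rightarrow> nat \<Rightarrow> int" where
  "cubic_binomial n m = coeff ((monom (-1) 3 + 1) ^ n) m"

lemma cubic_binomial_eq:
  "cubic_binomial n m = (if 3 dvd m then (-1) ^ (m div 3) * int (n choose (m div 3)) else 0)"
  unfolding cubic_binomial_def by (simp add: coeff_monom_plus_one_power mult.commute)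

definition convolution_term :: "nat \<Rightarrow> nat \<Rightarrow> nat \<Rightarrow> int" where
  "convolution_term n m i = trinomial n i * ((-1) ^ (m - i) * int (n choose (m - i)))"

lemma trinomial_convolution: "(\<Sum>i\<le>m. convolution_term n m i) = cubic_binomial n m"
proof -
  have "[:1, 1, 1:] * (monom (-1) 1 + 1) = (monom (-1) 3 + 1 :: int poly)"
    by (simp add: monom_Suc monom_0 one_pCons numeral_3_eq_3)
  then have "[:1, 1, 1:] ^ n * (monom (-1) 1 + 1) ^ n = (monom (-1) 3 + 1 :: int poly) ^ n"
    by (simp only: flip: power_mult_distrib)
  then have "cubic_binomial n m = coeff ([:1, 1, 1:] ^ n * (monom (-1) 1 + 1) ^ n) m"
    unfolding cubic_binomial_def by simp
  also have "\<dots> = (\<Sum>i\<le>m. convolution_term n m i)"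
    unfolding coeff_mult convolution_term_def
    by (simp add: coeff_monom_plus_one_power trinomial_def mult_ac)
  finally show ?thesis ..
qed

lemma cubic_binomial_dvd_partial_convolution:
  assumes "B \<subseteq> {..m}" and "\<And>i. i \<le> m \<Longrightarrow> i \<notin> B \<Longrightarrow> d dvd convolution_term n m i"
  shows "d dvd cubic_binomial n m - sum (convolution_term n m) B"
proof -
  have "sum (convolution_term n m) {..m} = sum (convolution_term n m) ({..m} - B) + sum (convolution_term n m) B"
    using assms(1) by (intro sum.subset_diff) auto
  moreover have "d dvd sum (convolution_term n m) ({..m} - B)"
    using assms(2) by (intro dvd_sum) auto
  ultimately show ?thesis
    by (simp flip: trinomial_convolution)
qed

section \<open>Congruences modulo a prime\<close>

(* The coefficients of 1 / (1 + x + x^2) = (1 - x) / (1 - x^3). *)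
definition inv_trinomial_coeff :: "nat \<Rightarrow> int" where
  "inv_trinomial_coeff m = (if m mod 3 = 0 then 1 else if m mod 3 = 1 then -1 else 0)"

lemma inv_trinomial_coeff_rec: "inv_trinomial_coeff (m + 2) + inv_trinomial_coeff (m + 1) + inv_trinomial_coeff m = 0"
  unfolding inv_trinomial_coeff_def by presburger

lemma inv_trinomial_coeff_step:
  assumes "(m + 2) mod 3 \<noteq> 0"
  shows "inv_trinomial_coeff (m + 1) - inv_trinomial_coeff m + 1 = (if (m + 2) mod 3 = 1 then 2 else -1)"
proof -
  have mods: "(m + 1) mod 3 = (m mod 3 + 1) mod 3" "(m + 2) mod 3 = (m mod 3 + 2) mod 3"
    by (metis mod_add_left_eq)+
  consider "m mod 3 = 0" | "m mod 3 = 1" | "m mod 3 = 2" by linarith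
  then show ?thesis
    using assms unfolding inv_trinomial_coeff_def mods by cases simp_all
qed

lemma quadratic_form_cong:
  fixes P A B e1 e2 :: int
  assumes "[A = e1] (mod P)" and "[B = 2 + P * e2] (mod P^2)"
  shows "[- 36 * P^2 * (4*P + 5) * A^2 + 12 * P * (P + 2) * (4*P + 3) * A * B - (P + 2)^2 * (4*P + 1) * B^2
          = 16 * (9 * e1 - e2 - 5) * P - 16] (mod P^2)"
proof -
  have "P^2 dvd P * (A - e1)"
    using assms(1) unfolding cong_iff_dvd_diff power2_eq_square by (rule mult_dvd_mono[OF dvd_refl])
  moreover have "P^2 dvd P * (B - 2)"
  proof -
    have "P dvd B - 2 - P * e2"
      using assms(2) unfolding cong_iff_dvd_diff power2_eq_square by (simp add: algebra_simps dvd_mult_left)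
    then have "P dvd B - 2"
      by (metis dvd_add_left_iff dvd_triv_left diff_add_cancel)
    then show ?thesis
      unfolding power2_eq_square by (rule mult_dvd_mono[OF dvd_refl])
  qed
  moreover have "P^2 dvd B^2 - 4 - 4 * P * e2"
  proof -
    have "B^2 - 4 - 4 * P * e2 = (B - (2 + P * e2)) * (B + 2 + P * e2) + P^2 * e2^2"
      by (simp add: algebra_simps power2_eq_square)
    then show ?thesis
      using assms(2) unfolding cong_iff_dvd_diff by simp
  qed
  moreover have "- 36 * P^2 * (4*P + 5) * A^2 + 12 * P * (P + 2) * (4*P + 3) * A * B - (P + 2)^2 * (4*P + 1) * B^2
        - (16 * (9 * e1 - e2 - 5) * P - 16)
      = P^2 * (- 36 * (4*P + 5) * A^2 + 24 * e1 * (4*P + 11) - (68 + 80 * e2) - (16 + 68 * e2) * P - 16 * e2 * P^2)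
        + 12 * (P + 2) * (4*P + 3) * (B * (P * (A - e1)) + e1 * (P * (B - 2)))
        - (P + 2)^2 * (4*P + 1) * (B^2 - 4 - 4 * P * e2)"
    by (simp add: algebra_simps power2_eq_square power3_eq_cube)
  ultimately show ?thesis
    unfolding cong_iff_dvd_diff by simp
qed

context
  fixes p :: nat
  assumes prime_p: "prime p" and p_gt_3: "p > 3"
begin

lemma prime_dvd_choose: "0 < k \<Longrightarrow> k < p \<Longrightarrow> int p dvd int (p choose k)"
  using dvd_choose_prime[of k p] prime_p by simp

lemma odd_prime: "odd p"
  using prime_p p_gt_3 prime_odd_nat by auto

lemma prime_mod_3: "p mod 3 = 1 \<or> p mod 3 = 2"
proof -
  have "\<not> 3 dvd p"
    using prime_p p_gt_3 primes_dvd_imp_eq[of 3 p] by auto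
  then show ?thesis by presburger
qed

lemma convolution_term_dvd: "0 < m - i \<Longrightarrow> m - i < p \<Longrightarrow> int p dvd convolution_term p m i"
  unfolding convolution_term_def using prime_dvd_choose by simp

lemma cubic_binomial_dvd: "0 < m \<Longrightarrow> m < 3 * p \<Longrightarrow> int p dvd cubic_binomial p m"
  unfolding cubic_binomial_eq using prime_dvd_choose[of "m div 3"] by auto

lemma trinomial_prime_dvd:
  assumes "0 < m" "m < p"
  shows "int p dvd trinomial p m"
proof -
  have "int p dvd cubic_binomial p m - sum (convolution_term p m) {m}"
    using assms by (intro cubic_binomial_dvd_partial_convolution convolution_term_dvd) auto
  then have "int p dvd cubic_binomial p m - trinomial p m"
    by (simp add: convolution_term_def)
  moreover have "int p dvd cubic_binomial p m"
    using assms by (intro cubic_binomial_dvd) auto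
  ultimately show ?thesis
    using dvd_diff_right_iff by blast
qed

lemma convolution_term_dvd_square:
  assumes "0 < i" "i < p" "0 < m - i" "m - i < p"
  shows "int p ^ 2 dvd convolution_term p m i"
  unfolding convolution_term_def power2_eq_square
  using assms by (intro mult_dvd_mono trinomial_prime_dvd dvd_mult prime_dvd_choose) auto

lemma trinomial_prime_diag: "[trinomial p p = 1] (mod int p ^ 2)"
proof -
  have "int p ^ 2 dvd cubic_binomial p p - sum (convolution_term p p) {0, p}"
    by (rule cubic_binomial_dvd_partial_convolution) (auto intro: convolution_term_dvd_square)
  moreover have "cubic_binomial p p = 0"
    using prime_mod_3 by (auto simp: cubic_binomial_eq)
  moreover have "sum (convolution_term p p) {0, p} = trinomial p p - 1"
    using p_gt_3 odd_prime by (simp add: convolution_term_def)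
  ultimately show ?thesis
    unfolding cong_iff_dvd_diff by (simp add: dvd_diff_commute)
qed

lemma trinomial_prime_Suc: "int p dvd trinomial p (p + 1)"
proof -
  have "int p dvd cubic_binomial p (p + 1) - sum (convolution_term p (p + 1)) {p + 1}"
  proof (rule cubic_binomial_dvd_partial_convolution)
    fix i assume "i \<le> p + 1" "i \<notin> {p + 1}"
    then consider "i = 0" | "i = 1" | "2 \<le> i" "i \<le> p" by force
    then show "int p dvd convolution_term p (p + 1) i"
    proof cases
      case 2 then show ?thesis using trinomial_1_right[of p] by (simp add: convolution_term_def)
    next
      case 3 then show ?thesis by (intro convolution_term_dvd) auto
    qed (simp add: convolution_term_def binomial_eq_0)
  qed simp
  then have "int p dvd cubic_binomial p (p + 1) - trinomial p (p + 1)"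
    by (simp add: convolution_term_def)
  moreover have "int p dvd cubic_binomial p (p + 1)"
    using p_gt_3 by (intro cubic_binomial_dvd) auto
  ultimately show ?thesis
    using dvd_diff_right_iff by blast
qed

lemma trinomial_prime_Suc_Suc: "[trinomial p (p + 2) = cubic_binomial p (p + 2) + int p] (mod int p ^ 2)"
proof -
  define S where "S = sum (convolution_term p (p + 2)) {2, p, p + 1, p + 2}"
  have "int p ^ 2 dvd cubic_binomial p (p + 2) - S"
    unfolding S_def
  proof (rule cubic_binomial_dvd_partial_convolution)
    fix i assume "i \<le> p + 2" "i \<notin> {2, p, p + 1, p + 2}"
    then consider "i < 2" | "3 \<le> i" "i < p" by force
    then show "int p ^ 2 dvd convolution_term p (p + 2) i"
    proof cases
      case 1 then show ?thesis by (simp add: convolution_term_def binomial_eq_0)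
    next
      case 2 then show ?thesis by (intro convolution_term_dvd_square) auto
    qed
  qed auto
  moreover have "int p ^ 2 dvd int (p choose 2) * (trinomial p p - 1)"
    using trinomial_prime_diag by (simp add: cong_iff_dvd_diff)
  moreover have "int p ^ 2 dvd int p * trinomial p (p + 1)"
    using trinomial_prime_Suc by (simp add: power2_eq_square)
  moreover have "trinomial p (p + 2) - (cubic_binomial p (p + 2) + int p)
      = int p * trinomial p (p + 1) - int (p choose 2) * (trinomial p p - 1) - (cubic_binomial p (p + 2) - S)"
    using p_gt_3 odd_prime by (simp add: S_def convolution_term_def trinomial_2_right algebra_simps)
  ultimately show ?thesis
    unfolding cong_iff_dvd_diff by (metis dvd_diff)
qed

lemma binomial_pred_prime_cong: "k < p \<Longrightarrow> [(-1) ^ k * int ((p - 1) choose k) = 1] (mod int p)"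
proof (induction k)
  case (Suc k)
  have "p choose Suc k = ((p - 1) choose k) + ((p - 1) choose Suc k)"
    using p_gt_3 binomial_Suc_Suc[of "p - 1" k] by simp
  then have eq: "(-1) ^ Suc k * int ((p - 1) choose Suc k) - 1
      = (-1) ^ Suc k * int (p choose Suc k) + ((-1) ^ k * int ((p - 1) choose k) - 1)"
    by (simp add: algebra_simps)
  have "int p dvd (-1) ^ Suc k * int (p choose Suc k)"
    using Suc.prems by (intro dvd_mult prime_dvd_choose) auto
  moreover have "int p dvd (-1) ^ k * int ((p - 1) choose k) - 1"
    using Suc by (simp add: cong_iff_dvd_diff)
  ultimately show ?case
    unfolding cong_iff_dvd_diff eq by (rule dvd_add)
qed simp

lemma cubic_binomial_prime_Suc_Suc:
  "[2 * cubic_binomial p (p + 2) = (if p mod 3 = 1 then - 3 * int p else 0)] (mod int p ^ 2)"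
proof (cases "p mod 3 = 1")
  case True
  define j where "j = (p + 2) div 3"
  have "p + 2 = 3 * j"
    using True unfolding j_def by presburger
  with p_gt_3 have j: "p + 2 = 3 * j" "0 < j" "j < p"
    by auto
  define X Y where "X = (-1) ^ j * int (p choose j)" and "Y = (-1) ^ (j - 1) * int ((p - 1) choose (j - 1))"
  have jX: "int j * X = - (int p * Y)"
  proof -
    have "int j * int (p choose j) = int p * int ((p - 1) choose (j - 1))"
      using times_binomial_minus1_eq[OF j(2), of p] by (simp flip: of_nat_mult)
    moreover have "(-1 :: int) ^ j = - ((-1) ^ (j - 1))"
      using j(2) by (cases j) auto
    ultimately show ?thesis
      unfolding X_def Y_def by (simp add: algebra_simps)
  qed
  have "int p + 2 = 3 * int j"
    using j(1) by linarith
  then have "(int p + 2) * X = 3 * (int j * X)"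
    by simp
  also have "\<dots> = - 3 * (int p * Y)"
    unfolding jX by simp
  finally have eq: "2 * X + 3 * int p = - (int p * X + 3 * (int p * (Y - 1)))"
    by (simp add: algebra_simps)
  have "int p ^ 2 dvd int p * X"
    unfolding X_def power2_eq_square using j by (intro mult_dvd_mono dvd_mult prime_dvd_choose) auto
  moreover have "int p ^ 2 dvd int p * (Y - 1)"
    using binomial_pred_prime_cong[of "j - 1"] j unfolding Y_def power2_eq_square cong_iff_dvd_diff
    by (intro mult_dvd_mono) auto
  ultimately have "int p ^ 2 dvd 2 * X + 3 * int p"
    unfolding eq dvd_minus_iff by (blast intro: dvd_add dvd_mult)
  moreover have "cubic_binomial p (p + 2) = X"
    unfolding cubic_binomial_eq X_def j_def using j(1) by simp
  ultimately show ?thesis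
    using True unfolding cong_iff_dvd_diff by simp
next
  case False
  then have "\<not> 3 dvd p + 2" using prime_mod_3 by presburger
  then show ?thesis using False by (simp add: cubic_binomial_eq)
qed

lemma motzkin_prime_cong: "[2 * M p = 2 + int p * (if p mod 3 = 1 then 1 else -2)] (mod int p ^ 2)"
proof -
  have "[2 * M p = 2 * (1 - (cubic_binomial p (p + 2) + int p))] (mod int p ^ 2)"
    unfolding motzkin_eq_trinomial
    by (intro cong_mult cong_diff cong_refl trinomial_prime_diag trinomial_prime_Suc_Suc)
  also have "2 * (1 - (cubic_binomial p (p + 2) + int p)) = 2 - 2 * int p - 2 * cubic_binomial p (p + 2)"
    by (simp add: algebra_simps)
  also have "[2 - 2 * int p - 2 * cubic_binomial p (p + 2)
      = 2 - 2 * int p - (if p mod 3 = 1 then - 3 * int p else 0)] (mod int p ^ 2)"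
    by (intro cong_diff cong_refl cubic_binomial_prime_Suc_Suc)
  also have "2 - 2 * int p - (if p mod 3 = 1 then - 3 * int p else 0) = 2 + int p * (if p mod 3 = 1 then 1 else -2)"
    by simp
  finally show ?thesis .
qed

(* Modulo p and below degree p, (1 + x + x^2)^p is 1, so (1 + x + x^2)^(p-1) is 1 / (1 + x + x^2). *)
lemma trinomial_pred_prime_cong: "m < p \<Longrightarrow> [trinomial (p - 1) m = inv_trinomial_coeff m] (mod int p)"
proof (induction m rule: induct_nat_012)
  case 1
  then show ?case
    using trinomial_1_right[of "p - 1"] by (simp add: inv_trinomial_coeff_def cong_iff_dvd_diff)
next
  case (ge2 m)
  have "trinomial p (Suc (Suc m)) = trinomial (p - 1) (m + 2) + trinomial (p - 1) (m + 1) + trinomial (p - 1) m"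
    using p_gt_3 trinomial_Suc_Suc[of "p - 1" m] by simp
  moreover have "[trinomial p (Suc (Suc m)) = 0] (mod int p)"
    using ge2.prems by (simp add: cong_0_iff trinomial_prime_dvd)
  ultimately have "[trinomial (p - 1) (m + 2) = - trinomial (p - 1) (m + 1) - trinomial (p - 1) m] (mod int p)"
    by (simp add: cong_iff_dvd_diff algebra_simps)
  also have "[- trinomial (p - 1) (m + 1) - trinomial (p - 1) m
      = - inv_trinomial_coeff (m + 1) - inv_trinomial_coeff m] (mod int p)"
    using ge2 by (intro cong_diff cong_uminus) auto
  also have "- inv_trinomial_coeff (m + 1) - inv_trinomial_coeff m = inv_trinomial_coeff (m + 2)"
    using inv_trinomial_coeff_rec[of m] by simp
  finally show ?case by simp
qed (simp add: inv_trinomial_coeff_def)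

lemma motzkin_pred_prime_cong: "[M (p - 1) = (if p mod 3 = 1 then 2 else -1)] (mod int p)"
proof -
  define s where "s = trinomial (p - 1)"
  have "trinomial p p = s p + s (p - 1) + s (p - 2)"
    using p_gt_3 trinomial_Suc_Suc[of "p - 1" "p - 2"] unfolding s_def
    by (simp add: numeral_2_eq_2 Suc_diff_Suc)
  moreover have "trinomial p (p + 1) = s (p + 1) + s p + s (p - 1)"
    using p_gt_3 trinomial_Suc_Suc[of "p - 1" "p - 1"] unfolding s_def by simp
  moreover have "M (p - 1) = s (p - 1) - s (p + 1)"
    unfolding s_def motzkin_eq_trinomial using p_gt_3 by simp
  ultimately have "M (p - 1) = s (p - 1) - s (p - 2) + (trinomial p p - 1) - trinomial p (p + 1) + 1"
    by simp
  also have "[\<dots> = inv_trinomial_coeff (p - 1) - inv_trinomial_coeff (p - 2) + 0 - 0 + 1] (mod int p)"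
  proof (intro cong_add cong_diff cong_refl)
    show "[s (p - 1) = inv_trinomial_coeff (p - 1)] (mod int p)"
      unfolding s_def using p_gt_3 by (intro trinomial_pred_prime_cong) simp
    show "[s (p - 2) = inv_trinomial_coeff (p - 2)] (mod int p)"
      unfolding s_def using p_gt_3 by (intro trinomial_pred_prime_cong) simp
    show "[trinomial p p - 1 = 0] (mod int p)"
      using trinomial_prime_diag cong_dvd_modulus[of _ _ "int p ^ 2" "int p"] by (simp add: cong_diff_iff_cong_0)
    show "[trinomial p (p + 1) = 0] (mod int p)"
      using trinomial_prime_Suc by (simp add: cong_0_iff)
  qed
  also have "inv_trinomial_coeff (p - 1) - inv_trinomial_coeff (p - 2) + 0 - 0 + 1 = (if p mod 3 = 1 then 2 else -1)"
  proof -
    have "p - 2 + 2 = p" "p - 2 + 1 = p - 1"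
      using p_gt_3 by auto
    then show ?thesis
      using inv_trinomial_coeff_step[of "p - 2"] prime_mod_3 by auto
  qed
  finally show ?thesis .
qed

lemma Legendre_prime_3: "Legendre (int p) 3 = (if p mod 3 = 1 then 1 else -1)"
proof -
  have p_mod: "int p mod 3 = int (p mod 3)"
    by (simp add: zmod_int)
  have "\<not> [int p = 0] (mod 3)"
    using prime_mod_3 p_mod by (auto simp: cong_def)
  moreover have "QuadRes 3 (int p) \<longleftrightarrow> p mod 3 = 1"
  proof
    assume "QuadRes 3 (int p)"
    then obtain y :: int where "[y^2 = int p] (mod 3)"
      unfolding QuadRes_def by blast
    then have "((y mod 3)^2) mod 3 = int (p mod 3)"
      by (simp add: cong_def power_mod p_mod)
    moreover have "y mod 3 = 0 \<or> y mod 3 = 1 \<or> y mod 3 = 2"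
      by presburger
    ultimately show "p mod 3 = 1"
      using prime_mod_3 by (auto simp: power2_eq_square)
  next
    assume "p mod 3 = 1"
    then have "[1^2 = int p] (mod 3)"
      by (simp add: cong_def p_mod)
    then show "QuadRes 3 (int p)"
      unfolding QuadRes_def by blast
  qed
  ultimately show ?thesis
    unfolding Legendre_def by simp
qed

theorem motzkin_square_sum_prime_cong:
  "[(\<Sum>k=0..p-1. int ((2*k + 1) * (motzkin k)^2)) = 12 * int p * Legendre (int p) 3] (mod (int p)^2)"
proof -
  define T where "T = (\<Sum>k=0..p-1. int ((2*k + 1) * (motzkin k)^2))"
  define e1 e2 :: int where "e1 = (if p mod 3 = 1 then 2 else -1)" and "e2 = (if p mod 3 = 1 then 1 else -2)"
  have "T = 1 + motzkin_square_sum (p - 1)"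
    unfolding T_def motzkin_square_sum_def by (simp add: sum.atLeast_Suc_atMost)
  moreover have "4 * motzkin_square_sum (p - 1) = R_form (p - 1)"
    using p_gt_3 motzkin_square_sum_closed_form[of "p - 1"] R_form_eq_Q_form[of "p - 1"] by simp
  ultimately have "16 * T = 16 + 4 * R_form (p - 1)"
    by simp
  also have "[16 + 4 * R_form (p - 1) = 16 + (16 * (9 * e1 - e2 - 5) * int p - 16)] (mod int p ^ 2)"
  proof -
    have "[M (p - 1) = e1] (mod int p)"
      unfolding e1_def by (rule motzkin_pred_prime_cong)
    moreover have "[2 * M p = 2 + int p * e2] (mod int p ^ 2)"
      unfolding e2_def by (rule motzkin_prime_cong)
    moreover have "p \<ge> 1"
      using p_gt_3 by simp
    ultimately show ?thesis
      unfolding R_form_pred[OF \<open>p \<ge> 1\<close>] by (intro cong_add cong_refl quadratic_form_cong)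
  qed
  also have "16 + (16 * (9 * e1 - e2 - 5) * int p - 16) = 16 * (12 * int p * Legendre (int p) 3)"
    unfolding e1_def e2_def Legendre_prime_3 by simp
  finally have "[16 * T = 16 * (12 * int p * Legendre (int p) 3)] (mod int p ^ 2)" .
  moreover have "coprime (16 :: int) (int p ^ 2)"
  proof -
    have "coprime (2 :: int) (int p ^ 2)"
      using odd_prime by simp
    then have "coprime ((2 :: int) ^ 4) (int p ^ 2)"
      by (rule coprime_power_left_iff[THEN iffD2, OF disjI1])
    then show ?thesis by simp
  qed
  ultimately show ?thesis
    unfolding T_def using cong_mult_lcancel by blast
qed

end

theorem theorem1p1:
  shows "(\<forall>n::nat. n \<ge> 1 \<longrightarrow>
            (2 / of_nat n) * (\<Sum>k=1..n. of_nat ((2*k+1) * (motzkin k)^2) :: rat) \<in> \<int>)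
       \<and> (\<forall>p::nat. prime p \<and> p > 3 \<longrightarrow>
            [(\<Sum>k=0..p-1. int ((2*k+1) * (motzkin k)^2))
               = 12 * int p * Legendre (int p) 3] (mod (int p)^2))"
  using motzkin_square_sum_integrality motzkin_square_sum_prime_cong by blast

end
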